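(* For all $\alpha\in(0,\pi/2)$ and $\beta\in[0,\alpha]$, we have $r_0(\alpha,\beta)\le 1$. Moreover, $r_0(\alpha,\beta)\le 0$ if and only if $\alpha\le\pi/4$ and $\beta\le t(\alpha)$.
   Context: For $\alpha\in(0,\pi/2)$ and $\beta\in[0,\alpha]$, let $A=\frac{2\tan\beta}{\tan\alpha+\tan\beta}$, $B=2\cos(2\alpha)$, and $r_0(\alpha,\beta)=\frac{2A-B}{2-AB}$. Let $t(\alpha)=\arctan\!\left(\frac{\sin(3\alpha)-\sin\alpha}{3\cos\alpha-\cos(3\alpha)}\right)$. *)

theory Defs
  imports Complex_Main
begin

definition A_fn :: "real \<Rightarrow> real \<Rightarrow> real" where
  "A_fn \<alpha> \<beta> = 2 * tan \<beta> / (tan \<alpha> + tan \<beta>)"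

definition B_fn :: "real \<Rightarrow> real" where
  "B_fn \<alpha> = 2 * cos (2 * \<alpha>)"

definition r0 :: "real \<Rightarrow> real \<Rightarrow> real" where
  "r0 \<alpha> \<beta> = (2 * A_fn \<alpha> \<beta> - B_fn \<alpha>) / (2 - A_fn \<alpha> \<beta> * B_fn \<alpha>)"

definition t_fn :: "real \<Rightarrow> real" where
  "t_fn \<alpha> = arctan ((sin (3 * \<alpha>) - sin \<alpha>) / (3 * cos \<alpha> - cos (3 * \<alpha>)))"

end

theory Submission
  imports Defs
begin

text \<open>With \<open>a = tan \<alpha>\<close>, \<open>b = tan \<beta>\<close> and \<open>k = cos (2\<alpha>)\<close> we have \<open>A = 2b/(a+b) \<in> [0,1]\<close> and
  \<open>B = 2k \<in> (-2,2)\<close>, and \<open>r\<^sub>0 = (2A - B)/(2 - AB)\<close> has positive denominator, so \<open>r\<^sub>0 \<le> 1\<close> amounts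
  to \<open>(A - 1)(2 + B) \<le> 0\<close>. Likewise \<open>r\<^sub>0 \<le> 0\<close> amounts to \<open>A \<le> k\<close>, i.e. \<open>b \<le> a k/(2 - k)\<close>, and the
  right-hand side is exactly \<open>tan (t \<alpha>)\<close>. It is negative for \<open>\<alpha> > \<pi>/4\<close>, which rules out
  \<open>r\<^sub>0 \<le> 0\<close> there since \<open>b \<ge> 0\<close>.\<close>

lemma moebius_denominator_pos:
  fixes x y :: real
  assumes "0 \<le> x" "x \<le> 1" "\<bar>y\<bar> < 2"
  shows "0 < 2 - x * y"
proof -
  have "x * y \<le> \<bar>x * y\<bar>" by simp
  also have "\<dots> \<le> \<bar>y\<bar>" using assms by (simp add: abs_mult mult_left_le_one_le)
  finally show ?thesis using assms(3) by linarith
qed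

lemma moebius_le_one:
  fixes x y :: real
  assumes "0 \<le> x" "x \<le> 1" "\<bar>y\<bar> < 2"
  shows "(2 * x - y) / (2 - x * y) \<le> 1"
proof -
  have "(x - 1) * (2 + y) \<le> 0" using assms by (intro mult_nonpos_nonneg) auto
  then have "2 * x - y \<le> 2 - x * y" by (simp add: algebra_simps)
  then show ?thesis using moebius_denominator_pos[OF assms] by simp
qed

lemma moebius_nonpos_iff:
  fixes x y :: real
  assumes "0 \<le> x" "x \<le> 1" "\<bar>y\<bar> < 2"
  shows "(2 * x - y) / (2 - x * y) \<le> 0 \<longleftrightarrow> 2 * x \<le> y"
  using moebius_denominator_pos[OF assms] by (simp add: divide_le_0_iff)

lemma ratio_bounds:
  fixes a b :: real
  assumes "0 < a" "0 \<le> b" "b \<le> a"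
  shows "0 \<le> 2 * b / (a + b) \<and> 2 * b / (a + b) \<le> 1"
  using assms by (simp add: field_simps)

lemma ratio_le_iff:
  fixes a b k :: real
  assumes "0 < a + b" "k < 2"
  shows "2 * b / (a + b) \<le> k \<longleftrightarrow> b \<le> a * k / (2 - k)"
  using assms by (simp add: field_simps)

lemma A_fn_bounds:
  assumes "0 < \<alpha>" "\<alpha> < pi / 2" "0 \<le> \<beta>" "\<beta> \<le> \<alpha>"
  shows "0 \<le> A_fn \<alpha> \<beta> \<and> A_fn \<alpha> \<beta> \<le> 1"
  unfolding A_fn_def
  using assms by (intro ratio_bounds tan_gt_zero tan_pos_pi2_le tan_mono_le) auto

lemma abs_B_fn_less_2:
  assumes "0 < \<alpha>" "\<alpha> < pi / 2"
  shows "\<bar>B_fn \<alpha>\<bar> < 2"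
proof -
  have "cos pi < cos (2 * \<alpha>)" "cos (2 * \<alpha>) < cos 0"
    using assms by (intro cos_monotone_0_pi; simp)+
  then show ?thesis unfolding B_fn_def by simp
qed

lemma t_fn_eq_arctan:
  assumes "0 < cos \<alpha>"
  shows "t_fn \<alpha> = arctan (tan \<alpha> * cos (2 * \<alpha>) / (2 - cos (2 * \<alpha>)))"
proof -
  have num: "sin (3 * \<alpha>) - sin \<alpha> = 2 * sin \<alpha> * cos (2 * \<alpha>)"
    by (simp add: sin_diff_sin)
  have den: "3 * cos \<alpha> - cos (3 * \<alpha>) = 2 * cos \<alpha> * (2 - cos (2 * \<alpha>))"
    unfolding cos_treble_cos cos_double_cos by (simp add: power3_eq_cube power2_eq_square algebra_simps)
  show ?thesis
    unfolding t_fn_def num den tan_def using assms by simp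
qed

lemma t_fn_nonneg_imp_le_pi_div_4:
  assumes "0 < \<alpha>" "\<alpha> < pi / 2" "0 \<le> t_fn \<alpha>"
  shows "\<alpha> \<le> pi / 4"
proof -
  have "0 < tan \<alpha>" using assms by (simp add: tan_gt_zero)
  moreover have "0 < 2 - cos (2 * \<alpha>)" using cos_le_one[of "2 * \<alpha>"] by linarith
  moreover have "0 \<le> tan \<alpha> * cos (2 * \<alpha>) / (2 - cos (2 * \<alpha>))"
    using assms t_fn_eq_arctan[OF cos_gt_zero[OF assms(1,2)]] by simp
  ultimately have "cos (pi / 2) \<le> cos (2 * \<alpha>)"
    by (simp add: zero_le_divide_iff zero_le_mult_iff)
  then show ?thesis using assms by (subst (asm) cos_mono_le_eq) auto
qed

theorem lemma6:
  fixes \<alpha> \<beta> :: real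
  assumes "0 < \<alpha>" and "\<alpha> < pi / 2" and "0 \<le> \<beta>" and "\<beta> \<le> \<alpha>"
  shows "r0 \<alpha> \<beta> \<le> 1 \<and> (r0 \<alpha> \<beta> \<le> 0 \<longleftrightarrow> \<alpha> \<le> pi / 4 \<and> \<beta> \<le> t_fn \<alpha>)"
proof -
  have A: "0 \<le> A_fn \<alpha> \<beta>" "A_fn \<alpha> \<beta> \<le> 1" using A_fn_bounds assms by auto
  have B: "\<bar>B_fn \<alpha>\<bar> < 2" using abs_B_fn_less_2 assms by auto
  have tan_sum_pos: "0 < tan \<alpha> + tan \<beta>"
    using assms by (intro add_pos_nonneg tan_gt_zero tan_pos_pi2_le) auto
  have cos_less_2: "cos (2 * \<alpha>) < 2" using cos_le_one[of "2 * \<alpha>"] by linarith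
  have "r0 \<alpha> \<beta> \<le> 0 \<longleftrightarrow> A_fn \<alpha> \<beta> \<le> cos (2 * \<alpha>)"
    unfolding r0_def moebius_nonpos_iff[OF A B] by (simp add: B_fn_def)
  also have "\<dots> \<longleftrightarrow> tan \<beta> \<le> tan \<alpha> * cos (2 * \<alpha>) / (2 - cos (2 * \<alpha>))"
    unfolding A_fn_def using ratio_le_iff[OF tan_sum_pos cos_less_2] by simp
  also have "\<dots> \<longleftrightarrow> \<beta> \<le> t_fn \<alpha>"
  proof -
    have "\<beta> = arctan (tan \<beta>)" using assms by (simp add: arctan_tan)
    then show ?thesis
      using t_fn_eq_arctan[OF cos_gt_zero[OF assms(1,2)]] by (metis arctan_le_iff)
  qed
  finally have "r0 \<alpha> \<beta> \<le> 0 \<longleftrightarrow> \<beta> \<le> t_fn \<alpha>" .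
  then show ?thesis
    using moebius_le_one[OF A B] t_fn_nonneg_imp_le_pi_div_4 assms
    unfolding r0_def by auto
qed

end
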